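(* Let $1<p<q<\infty$. There exist functions $\phi,\psi\in L^p_{loc}(\mathbb{R})$ such that $S_p(\phi,\psi)<\infty$ and $T_p(\phi,\psi)<\infty$, but $S_q(\phi,\psi)=\infty$.
   Context: For $0<r<\infty$, with $\langle g\rangle_I=\frac1{|I|}\int_Ig$ and suprema over all intervals $I\subset\mathbb{R}$: $S_r(b_1,b_2)=\sup_I\big(\frac1{|I|}\int_I|b_1-\langle b_1\rangle_I|^r\big)^{1/r}\big(\frac1{|I|}\int_I|b_2-\langle b_2\rangle_I|^r\big)^{1/r}$ and $T_r(b_1,b_2)=\sup_I\big(\frac1{|I|}\int_I|b_1-\langle b_1\rangle_I|^r|b_2-\langle b_2\rangle_I|^r\big)^{1/r}$. *)

theory Defs
  imports "HOL-Analysis.Analysis"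
begin

definition avg :: "(real \<Rightarrow> real) \<Rightarrow> real \<Rightarrow> real \<Rightarrow> real" where
  "avg g a b = (LINT x:{a..b}|lborel. g x) / (b - a)"

definition ennreal_rpow :: "ennreal \<Rightarrow> real \<Rightarrow> ennreal" where
  "ennreal_rpow x s = (if x = top then top else ennreal (enn2real x powr s))"

definition locally_Lp :: "real \<Rightarrow> (real \<Rightarrow> real) \<Rightarrow> bool" where
  "locally_Lp p f \<longleftrightarrow> f \<in> borel_measurable lborel \<and>
     (\<forall>a b. (\<integral>\<^sup>+ x\<in>{a..b}. ennreal (\<bar>f x\<bar> powr p) \<partial>lborel) < top)"

definition osc :: "real \<Rightarrow> (real \<Rightarrow> real) \<Rightarrow> real \<Rightarrow> real \<Rightarrow> ennreal" where
  "osc r g a b = ennreal_rpow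
     ((\<integral>\<^sup>+ x\<in>{a..b}. ennreal (\<bar>g x - avg g a b\<bar> powr r) \<partial>lborel) / ennreal (b - a)) (1 / r)"

definition S_r :: "real \<Rightarrow> (real \<Rightarrow> real) \<Rightarrow> (real \<Rightarrow> real) \<Rightarrow> ennreal" where
  "S_r r b1 b2 = (SUP I\<in>{(a, b). a < (b::real)}. osc r b1 (fst I) (snd I) * osc r b2 (fst I) (snd I))"

definition T_r :: "real \<Rightarrow> (real \<Rightarrow> real) \<Rightarrow> (real \<Rightarrow> real) \<Rightarrow> ennreal" where
  "T_r r b1 b2 = (SUP I\<in>{(a, b). a < (b::real)}. ennreal_rpow
     ((\<integral>\<^sup>+ x\<in>{fst I..snd I}. ennreal (\<bar>b1 x - avg b1 (fst I) (snd I)\<bar> powr r *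
                                      \<bar>b2 x - avg b2 (fst I) (snd I)\<bar> powr r) \<partial>lborel)
        / ennreal (snd I - fst I)) (1 / r))"

end

theory Submission
  imports Defs
begin

text \<open>Take \<open>\<phi> x = x powr (-\<alpha>)\<close> on \<open>[0,1]\<close> (zero elsewhere) with \<open>\<alpha> = 1/q\<close>, and the clamp
  \<open>\<psi> x = max 0 (min x 1)\<close>. On an interval \<open>I\<close> of length \<open>h\<close> put \<open>m = min h 1\<close>. Since
  \<open>\<integral>\<^sub>I \<phi>^p \<le> m^(1-\<alpha>p) / (1-\<alpha>p)\<close> and \<open>avg\<^sub>I \<phi> \<le> 1 / ((1-\<alpha>) m)\<close>, the \<open>L^p\<close> mean
  oscillation of \<open>\<phi>\<close> on \<open>I\<close> is at most \<open>C/m\<close>, while \<open>\<psi>\<close>, being 1-Lipschitz with values in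
  \<open>[0,1]\<close>, stays within \<open>m\<close> of its mean on \<open>I\<close>. Hence every term of \<open>S\<^sub>p\<close> and \<open>T\<^sub>p\<close> is at
  most \<open>C\<close>. But \<open>\<phi>^q = 1/x\<close> is not integrable at \<open>0\<close>, so the \<open>L^q\<close> oscillation of \<open>\<phi>\<close> on
  \<open>[0,1]\<close> is infinite, whereas that of \<open>\<psi>\<close> is positive; thus \<open>S\<^sub>q = \<infinity>\<close>.\<close>

lemma powr_add_le_add_powr:
  fixes x y g :: real
  assumes "0 \<le> x" "0 \<le> y" "0 < g" "g \<le> 1"
  shows "(x + y) powr g \<le> x powr g + y powr g"
proof (cases "x = 0 \<or> y = 0")
  case True
  then show ?thesis by auto
next
  case False
  then have x: "x > 0" and y: "y > 0" using assms by auto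
  have "(x + y) powr g = x * (x + y) powr (g - 1) + y * (x + y) powr (g - 1)"
    using powr_add[of "x + y" 1 "g - 1"] x y by (simp add: distrib_right)
  also have "x * (x + y) powr (g - 1) \<le> x * x powr (g - 1)"
    using x y assms by (intro mult_left_mono powr_mono2') auto
  also have "y * (x + y) powr (g - 1) \<le> y * y powr (g - 1)"
    using x y assms by (intro mult_left_mono powr_mono2') auto
  also have "x * x powr (g - 1) + y * y powr (g - 1) = x powr g + y powr g"
    using powr_add[of x 1 "g - 1"] powr_add[of y 1 "g - 1"] x y by simp
  finally show ?thesis by simp
qed

lemma abs_diff_powr_le_add_powr:
  fixes u v p :: real
  assumes "0 \<le> u" "0 \<le> v" "0 < p"
  shows "\<bar>u - v\<bar> powr p \<le> u powr p + v powr p"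
proof -
  have "\<bar>u - v\<bar> powr p \<le> max u v powr p"
    using assms by (intro powr_mono2) auto
  also have "\<dots> \<le> u powr p + v powr p" by (simp add: max_def)
  finally show ?thesis .
qed

lemma has_integral_powr_Icc:
  fixes u v g :: real
  assumes "0 \<le> u" "u \<le> v" "0 < g"
  shows "((\<lambda>x. x powr (g - 1)) has_integral (v powr g / g - u powr g / g)) {u..v}"
proof -
  have from_0: "((\<lambda>x. x powr (g - 1)) has_integral (w powr g / g)) {0..w}" if "0 \<le> w" for w
    using has_integral_powr_from_0[of "g - 1" w] that assms by simp
  have "(\<lambda>x. x powr (g - 1)) integrable_on {u..v}"
    using integrable_subinterval_real[OF has_integral_integrable[OF from_0[of v]]] assms by auto
  then obtain j where j: "((\<lambda>x. x powr (g - 1)) has_integral j) {u..v}" by blast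
  have "((\<lambda>x. x powr (g - 1)) has_integral (u powr g / g + j)) {0..v}"
    using has_integral_combine[OF _ _ from_0 j] assms by auto
  then have "u powr g / g + j = v powr g / g"
    using from_0[of v] assms has_integral_unique by auto
  then have "j = v powr g / g - u powr g / g" by linarith
  then show ?thesis using j by simp
qed

lemma nn_integral_powr_unit_interval_le:
  fixes g a b :: real
  assumes "0 < g" "g \<le> 1" "a < b"
  shows "(\<integral>\<^sup>+x\<in>{a..b}. ennreal (if 0 \<le> x \<and> x \<le> 1 then x powr (g - 1) else 0) \<partial>lborel)
         \<le> ennreal (min (b - a) 1 powr g / g)"
proof -
  define u where "u = min (max a 0) 1"
  define v where "v = min (max b 0) 1"
  have uv: "0 \<le> u" "u \<le> v" "v - u \<le> min (b - a) 1"
    using assms unfolding u_def v_def by auto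
  have "(\<integral>\<^sup>+x\<in>{a..b}. ennreal (if 0 \<le> x \<and> x \<le> 1 then x powr (g - 1) else 0) \<partial>lborel)
      \<le> (\<integral>\<^sup>+x. ennreal (x powr (g - 1)) * indicator {u..v} x \<partial>lborel)"
    by (intro nn_integral_mono) (auto simp: indicator_def u_def v_def)
  also have "\<dots> = ennreal (v powr g / g - u powr g / g)"
    by (rule nn_integral_has_integral_lebesgue'[OF _ has_integral_powr_Icc[OF uv(1,2) assms(1)]]) simp
  also have "\<dots> \<le> ennreal (min (b - a) 1 powr g / g)"
  proof (rule ennreal_leI)
    have "v powr g - u powr g \<le> (v - u) powr g"
      using powr_add_le_add_powr[of u "v - u" g] uv assms by simp
    also have "\<dots> \<le> min (b - a) 1 powr g"
      using uv assms by (intro powr_mono2) auto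
    finally show "v powr g / g - u powr g / g \<le> min (b - a) 1 powr g / g"
      using assms by (simp add: diff_divide_distrib[symmetric] divide_right_mono)
  qed
  finally show ?thesis .
qed

lemma nn_integral_inverse_Icc_0_eq_top:
  fixes d :: real
  assumes "0 < d"
  shows "(\<integral>\<^sup>+x\<in>{0..d}. ennreal (1 / x) \<partial>lborel) = top"
proof -
  have n_le: "ennreal (real n) \<le> (\<integral>\<^sup>+x\<in>{0..d}. ennreal (1 / x) \<partial>lborel)" for n :: nat
  proof -
    define e where "e = d * exp (- real n)"
    have e: "0 < e" "e \<le> d"
      using assms by (auto simp: e_def mult_le_cancel_left1)
    have hi: "((\<lambda>x. 1 / x) has_integral (ln d - ln e)) {e..d}"
    proof (rule fundamental_theorem_of_calculus)
      fix x assume "x \<in> {e..d}"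
      then have "0 < x" using e by auto
      then show "(ln has_vector_derivative 1 / x) (at x within {e..d})"
        unfolding has_real_derivative_iff_has_vector_derivative[symmetric]
        by (auto intro!: derivative_eq_intros)
    qed (use e in simp)
    have "ln d - ln e = real n"
      using assms by (simp add: e_def ln_mult)
    then have "ennreal (real n) = (\<integral>\<^sup>+x. ennreal (1 / x) * indicator {e..d} x \<partial>lborel)"
      using nn_integral_has_integral_lebesgue'[OF _ hi] e by simp
    also have "\<dots> \<le> (\<integral>\<^sup>+x\<in>{0..d}. ennreal (1 / x) \<partial>lborel)"
      using e by (intro nn_integral_mono) (auto simp: indicator_def)
    finally show ?thesis .
  qed
  show ?thesis
  proof (rule ccontr)
    assume "(\<integral>\<^sup>+x\<in>{0..d}. ennreal (1 / x) \<partial>lborel) \<noteq> top"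
    then obtain n where "(\<integral>\<^sup>+x\<in>{0..d}. ennreal (1 / x) \<partial>lborel) < of_nat n"
      using ennreal_Ex_less_of_nat top.not_eq_extremum by blast
    with n_le[of n] show False by (simp add: ennreal_of_nat_eq_real_of_nat)
  qed
qed

lemma set_nn_integral_mult_le_bound:
  fixes F G :: "'a \<Rightarrow> ennreal"
  assumes "F \<in> borel_measurable M" "S \<in> sets M" "\<And>x. x \<in> S \<Longrightarrow> G x \<le> C"
  shows "(\<integral>\<^sup>+x\<in>S. F x * G x \<partial>M) \<le> (\<integral>\<^sup>+x\<in>S. F x \<partial>M) * C"
proof -
  have "(\<integral>\<^sup>+x\<in>S. F x * G x \<partial>M) \<le> (\<integral>\<^sup>+x. (F x * indicator S x) * C \<partial>M)"
    using assms(3) by (intro nn_integral_mono) (auto simp: indicator_def intro: mult_left_mono)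
  also have "\<dots> = (\<integral>\<^sup>+x\<in>S. F x \<partial>M) * C"
    using assms(1) borel_measurable_indicator[OF assms(2)]
    by (intro nn_integral_multc borel_measurable_times_ennreal)
  finally show ?thesis .
qed

lemma set_nn_integral_abs_diff_powr_le:
  fixes f :: "real \<Rightarrow> real" and A p a b :: real
  assumes "f \<in> borel_measurable borel" "\<And>x. 0 \<le> f x" "0 \<le> A" "0 < p" "a \<le> b"
  shows "(\<integral>\<^sup>+x\<in>{a..b}. ennreal (\<bar>f x - A\<bar> powr p) \<partial>lborel)
    \<le> (\<integral>\<^sup>+x\<in>{a..b}. ennreal (f x powr p) \<partial>lborel) + ennreal (A powr p * (b - a))"
proof -
  have "(\<integral>\<^sup>+x\<in>{a..b}. ennreal (\<bar>f x - A\<bar> powr p) \<partial>lborel)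
     \<le> (\<integral>\<^sup>+x. ennreal (f x powr p) * indicator {a..b} x + ennreal (A powr p) * indicator {a..b} x \<partial>lborel)"
  proof (intro nn_integral_mono)
    fix x
    have "\<bar>f x - A\<bar> powr p \<le> f x powr p + A powr p"
      using abs_diff_powr_le_add_powr[of "f x" A p] assms by auto
    then show "ennreal (\<bar>f x - A\<bar> powr p) * indicator {a..b} x
      \<le> ennreal (f x powr p) * indicator {a..b} x + ennreal (A powr p) * indicator {a..b} x"
      by (auto simp: indicator_def ennreal_plus[symmetric] simp del: ennreal_plus)
  qed
  also have "\<dots> = (\<integral>\<^sup>+x\<in>{a..b}. ennreal (f x powr p) \<partial>lborel)
      + (\<integral>\<^sup>+x. ennreal (A powr p) * indicator {a..b} x \<partial>lborel)"
    using assms(1) by (intro nn_integral_add) (auto simp: measurable_lborel1)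
  also have "(\<integral>\<^sup>+x. ennreal (A powr p) * indicator {a..b} x \<partial>lborel) = ennreal (A powr p * (b - a))"
    using assms by (simp add: nn_integral_cmult_indicator ennreal_mult)
  finally show ?thesis .
qed

lemma abs_sub_avg_le:
  fixes f :: "real \<Rightarrow> real" and a b x M :: real
  assumes "a < b" "continuous_on {a..b} f" "\<And>y. y \<in> {a..b} \<Longrightarrow> \<bar>f x - f y\<bar> \<le> M"
  shows "\<bar>f x - avg f a b\<bar> \<le> M"
proof -
  have const: "set_integrable lborel {a..b} (\<lambda>y. c)" for c :: real
    unfolding set_integrable_def by (rule borel_integrable_compact) (auto intro: continuous_intros)
  have f: "set_integrable lborel {a..b} f"
    unfolding set_integrable_def by (rule borel_integrable_compact) (use assms(2) in auto)
  have const_int: "(LINT y:{a..b}|lborel. c) = (b - a) * c" for c :: real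
    using assms by (subst set_integral_const) auto
  have "(b - a) * (f x - M) \<le> (LINT y:{a..b}|lborel. f y)"
    using set_integral_mono[OF const f, of "f x - M"] assms(3) const_int by force
  moreover have "(LINT y:{a..b}|lborel. f y) \<le> (b - a) * (f x + M)"
    using set_integral_mono[OF f const, of "f x + M"] assms(3) const_int by force
  ultimately have "f x - M \<le> avg f a b" "avg f a b \<le> f x + M"
    using assms unfolding avg_def by (auto simp: field_simps)
  then show ?thesis by auto
qed

lemma ennreal_rpow_le:
  fixes Z :: ennreal and c s :: real
  assumes "Z \<le> ennreal c" "0 \<le> c" "0 < s"
  shows "ennreal_rpow Z s \<le> ennreal (c powr s)"
proof -
  have "Z \<noteq> top" using assms(1) by (metis ennreal_neq_top neq_top_trans)
  moreover have "enn2real Z \<le> c" using enn2real_mono[OF assms(1)] assms(2) by simp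
  ultimately show ?thesis unfolding ennreal_rpow_def using assms
    by (auto intro!: ennreal_leI powr_mono2)
qed

lemma ennreal_rpow_average_le:
  fixes Z :: ennreal and c h s :: real
  assumes "Z \<le> ennreal (c * h)" "0 < h" "0 \<le> c" "0 < s"
  shows "ennreal_rpow (Z / ennreal h) s \<le> ennreal (c powr s)"
proof (rule ennreal_rpow_le)
  have "Z / ennreal h \<le> ennreal (c * h) / ennreal h"
    by (rule divide_right_mono_ennreal[OF assms(1)])
  also have "\<dots> = ennreal c" using assms by (simp add: divide_ennreal)
  finally show "Z / ennreal h \<le> ennreal c" .
qed (use assms in auto)

lemma ennreal_rpow_pos:
  fixes x :: ennreal and s :: real
  assumes "0 < x"
  shows "0 < ennreal_rpow x s"
  using assms by (auto simp: ennreal_rpow_def enn2real_eq_0_iff)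

lemma osc_le:
  fixes g :: "real \<Rightarrow> real" and r a b M :: real
  assumes "a < b" "0 < r" "0 \<le> M" "\<And>x. x \<in> {a..b} \<Longrightarrow> \<bar>g x - avg g a b\<bar> \<le> M"
  shows "osc r g a b \<le> ennreal M"
proof -
  have "(\<integral>\<^sup>+x\<in>{a..b}. ennreal (\<bar>g x - avg g a b\<bar> powr r) \<partial>lborel)
      \<le> (\<integral>\<^sup>+x. ennreal (M powr r) * indicator {a..b} x \<partial>lborel)"
    using assms by (intro nn_integral_mono) (auto simp: indicator_def intro!: powr_mono2)
  also have "\<dots> = ennreal (M powr r * (b - a))"
    using assms by (simp add: nn_integral_cmult_indicator ennreal_mult)
  finally have "osc r g a b \<le> ennreal ((M powr r) powr (1 / r))"
    unfolding osc_def using assms by (intro ennreal_rpow_average_le) auto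
  then show ?thesis using assms by (simp add: powr_powr)
qed

lemma osc_pos:
  fixes g :: "real \<Rightarrow> real" and r a b :: real
  assumes "0 < (\<integral>\<^sup>+x\<in>{a..b}. ennreal (\<bar>g x - avg g a b\<bar> powr r) \<partial>lborel)"
  shows "0 < osc r g a b"
  unfolding osc_def using assms by (intro ennreal_rpow_pos) (simp add: ennreal_zero_less_divide)

lemma osc_eq_top:
  fixes g :: "real \<Rightarrow> real" and r a b :: real
  assumes "(\<integral>\<^sup>+x\<in>{a..b}. ennreal (\<bar>g x - avg g a b\<bar> powr r) \<partial>lborel) = top"
  shows "osc r g a b = top"
  unfolding osc_def using assms by (simp add: ennreal_rpow_def ennreal_top_divide)

lemma osc_mult_osc_le_S_r:
  fixes f g :: "real \<Rightarrow> real" and r a b :: real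
  assumes "a < b"
  shows "osc r f a b * osc r g a b \<le> S_r r f g"
  unfolding S_r_def using assms by (intro SUP_upper2[of "(a, b)"]) auto

definition phi :: "real \<Rightarrow> real \<Rightarrow> real" where
  "phi al x = (if 0 \<le> x \<and> x \<le> 1 then x powr (-al) else 0)"

definition psi :: "real \<Rightarrow> real" where
  "psi x = max 0 (min x 1)"

lemma phi_nonneg: "0 \<le> phi al x"
  by (simp add: phi_def)

lemma borel_measurable_phi [measurable]: "phi al \<in> borel_measurable borel"
  unfolding phi_def by measurable

lemma phi_powr: "phi al x powr p = (if 0 \<le> x \<and> x \<le> 1 then x powr ((1 - al * p) - 1) else 0)"
  by (simp add: phi_def powr_powr)

lemma nn_integral_phi_powr_le:
  fixes al p a b :: real
  assumes "0 < al * p" "al * p < 1" "a < b"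
  shows "(\<integral>\<^sup>+x\<in>{a..b}. ennreal (phi al x powr p) \<partial>lborel)
    \<le> ennreal (min (b - a) 1 powr (1 - al * p) / (1 - al * p))"
  unfolding phi_powr by (rule nn_integral_powr_unit_interval_le) (use assms in auto)

lemma avg_phi_bounds:
  fixes al a b :: real
  assumes "0 < al" "al < 1" "a < b"
  shows "0 \<le> avg (phi al) a b" "avg (phi al) a b * min (b - a) 1 \<le> 1 / (1 - al)"
proof -
  define m where "m = min (b - a) 1"
  have m: "0 < m" "m \<le> 1" "m \<le> b - a" using assms by (auto simp: m_def)
  define L where "L = (LINT x:{a..b}|lborel. phi al x)"
  have L0: "0 \<le> L" unfolding L_def set_lebesgue_integral_def
    by (intro Bochner_Integration.integral_nonneg) (auto simp: phi_nonneg)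
  have L_le: "L \<le> m powr (1 - al) / (1 - al)"
  proof (cases "integrable lborel (\<lambda>x. indicator {a..b} x *\<^sub>R phi al x)")
    case True
    have "ennreal L = (\<integral>\<^sup>+x\<in>{a..b}. ennreal (phi al x powr 1) \<partial>lborel)"
      unfolding L_def set_lebesgue_integral_def
      by (subst nn_integral_eq_integral[symmetric, OF True])
         (auto simp: phi_nonneg indicator_def intro!: nn_integral_cong)
    also have "\<dots> \<le> ennreal (m powr (1 - al) / (1 - al))"
      unfolding m_def using nn_integral_phi_powr_le[of al 1] assms by simp
    finally show ?thesis using m assms by (subst (asm) ennreal_le_iff) auto
  next
    case False
    then have "L = 0" unfolding L_def set_lebesgue_integral_def by (rule not_integrable_integral_eq)
    then show ?thesis using m assms by simp
  qed
  show "0 \<le> avg (phi al) a b" using L0 assms unfolding avg_def L_def[symmetric] by simp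
  have "m powr (1 - al) \<le> 1" using powr_mono2[of "1 - al" m 1] m assms by simp
  then have "L \<le> 1 / (1 - al)"
    using L_le assms by (smt (verit) divide_right_mono)
  then have "L * m \<le> 1 / (1 - al) * m"
    using m by (intro mult_right_mono) auto
  also have "\<dots> \<le> 1 / (1 - al) * (b - a)"
    using m assms by (intro mult_left_mono) auto
  finally show "avg (phi al) a b * min (b - a) 1 \<le> 1 / (1 - al)"
    unfolding avg_def L_def[symmetric] m_def[symmetric] using assms by (simp add: field_simps)
qed

lemma nn_integral_phi_dev_le:
  fixes al p a b :: real
  assumes "0 < al" "al * p < 1" "1 < p" "a < b"
  shows "(\<integral>\<^sup>+x\<in>{a..b}. ennreal (\<bar>phi al x - avg (phi al) a b\<bar> powr p) \<partial>lborel)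
     \<le> ennreal ((1 / (1 - al * p) + (1 / (1 - al)) powr p) / min (b - a) 1 powr p * (b - a))"
proof -
  define m where "m = min (b - a) 1"
  define A where "A = avg (phi al) a b"
  define h where "h = b - a"
  have m: "0 < m" "m \<le> 1" "m \<le> h" and h: "0 < h" using assms by (auto simp: m_def h_def)
  have al1: "al < 1" using assms
    by (metis less_trans mult.right_neutral mult_strict_left_mono)
  have A0: "0 \<le> A" and Am: "A * m \<le> 1 / (1 - al)"
    using avg_phi_bounds[OF assms(1) al1 assms(4)] by (auto simp: A_def m_def)
  have "(\<integral>\<^sup>+x\<in>{a..b}. ennreal (\<bar>phi al x - A\<bar> powr p) \<partial>lborel)
      \<le> (\<integral>\<^sup>+x\<in>{a..b}. ennreal (phi al x powr p) \<partial>lborel) + ennreal (A powr p * h)"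
    unfolding h_def using A0 assms by (intro set_nn_integral_abs_diff_powr_le) (auto simp: phi_nonneg)
  also have "\<dots> \<le> ennreal (m powr (1 - al * p) / (1 - al * p)) + ennreal (A powr p * h)"
    unfolding m_def using assms by (intro add_mono nn_integral_phi_powr_le) auto
  also have "\<dots> = ennreal (m powr (1 - al * p) / (1 - al * p) + A powr p * h)"
    using assms h by (intro ennreal_plus[symmetric]) auto
  also have "\<dots> \<le> ennreal ((1 / (1 - al * p) + (1 / (1 - al)) powr p) / m powr p * h)"
  proof (rule ennreal_leI)
    have "m powr (1 - al * p) * m powr p = m powr (1 - al * p + p)" by (simp add: powr_add)
    also have "\<dots> \<le> m powr 1" using m assms al1 by (intro powr_mono') auto
    finally have "m powr (1 - al * p) * m powr p \<le> h" using m by simp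
    moreover have "A powr p * m powr p \<le> (1 / (1 - al)) powr p"
      using Am A0 m assms by (auto simp: powr_mult[symmetric] intro!: powr_mono2)
    ultimately have "(m powr (1 - al * p) * m powr p) / (1 - al * p) + h * (A powr p * m powr p)
        \<le> h / (1 - al * p) + h * (1 / (1 - al)) powr p"
      using h assms by (intro add_mono divide_right_mono mult_left_mono) auto
    then have "(m powr (1 - al * p) / (1 - al * p) + A powr p * h) * m powr p
        \<le> h * (1 / (1 - al * p) + (1 / (1 - al)) powr p)"
      by (simp add: algebra_simps)
    then show "m powr (1 - al * p) / (1 - al * p) + A powr p * h
        \<le> (1 / (1 - al * p) + (1 / (1 - al)) powr p) / m powr p * h"
      using m by (simp add: le_divide_eq algebra_simps)
  qed
  finally show ?thesis unfolding A_def h_def m_def .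
qed

lemma psi_dev_le:
  fixes a b x :: real
  assumes "a < b" "x \<in> {a..b}"
  shows "\<bar>psi x - avg psi a b\<bar> \<le> min (b - a) 1"
proof (rule abs_sub_avg_le)
  show "continuous_on {a..b} psi" unfolding psi_def by (intro continuous_intros)
  show "\<bar>psi x - psi y\<bar> \<le> min (b - a) 1" if "y \<in> {a..b}" for y
    using assms that unfolding psi_def by (auto simp: abs_le_iff split: split_min split_max)
qed (use assms in auto)

lemma osc_phi_mult_osc_psi_le:
  fixes al p a b :: real
  assumes "0 < al" "al * p < 1" "1 < p" "a < b"
  shows "osc p (phi al) a b * osc p psi a b
    \<le> ennreal ((1 / (1 - al * p) + (1 / (1 - al)) powr p) powr (1 / p))"
proof -
  define K where "K = 1 / (1 - al * p) + (1 / (1 - al)) powr p"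
  define m where "m = min (b - a) 1"
  have m: "0 < m" and K: "0 \<le> K" using assms by (auto simp: m_def K_def)
  have "osc p (phi al) a b \<le> ennreal ((K / m powr p) powr (1 / p))"
    unfolding osc_def K_def m_def using nn_integral_phi_dev_le[OF assms] assms K m
    by (intro ennreal_rpow_average_le) (auto simp: K_def m_def)
  moreover have "osc p psi a b \<le> ennreal m"
    unfolding m_def using assms psi_dev_le by (intro osc_le) auto
  ultimately have "osc p (phi al) a b * osc p psi a b
      \<le> ennreal ((K / m powr p) powr (1 / p)) * ennreal m"
    by (intro mult_mono) auto
  also have "\<dots> = ennreal (K powr (1 / p))"
    using m K assms by (simp add: ennreal_mult[symmetric] powr_divide powr_powr)
  finally show ?thesis unfolding K_def .
qed

lemma T_r_term_phi_psi_le: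
  fixes al p a b :: real
  assumes "0 < al" "al * p < 1" "1 < p" "a < b"
  shows "ennreal_rpow ((\<integral>\<^sup>+ x\<in>{a..b}. ennreal (\<bar>phi al x - avg (phi al) a b\<bar> powr p *
            \<bar>psi x - avg psi a b\<bar> powr p) \<partial>lborel) / ennreal (b - a)) (1 / p)
    \<le> ennreal ((1 / (1 - al * p) + (1 / (1 - al)) powr p) powr (1 / p))"
proof -
  define K where "K = 1 / (1 - al * p) + (1 / (1 - al)) powr p"
  define m where "m = min (b - a) 1"
  have m: "0 < m" and K: "0 \<le> K" using assms by (auto simp: m_def K_def)
  have "(\<integral>\<^sup>+ x\<in>{a..b}. ennreal (\<bar>phi al x - avg (phi al) a b\<bar> powr p *
            \<bar>psi x - avg psi a b\<bar> powr p) \<partial>lborel)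
      = (\<integral>\<^sup>+ x\<in>{a..b}. ennreal (\<bar>phi al x - avg (phi al) a b\<bar> powr p) *
            ennreal (\<bar>psi x - avg psi a b\<bar> powr p) \<partial>lborel)"
    by (simp add: ennreal_mult)
  also have "\<dots> \<le> (\<integral>\<^sup>+ x\<in>{a..b}. ennreal (\<bar>phi al x - avg (phi al) a b\<bar> powr p) \<partial>lborel)
      * ennreal (m powr p)"
    unfolding m_def using psi_dev_le assms
    by (intro set_nn_integral_mult_le_bound ennreal_leI powr_mono2) auto
  also have "\<dots> \<le> ennreal (K / m powr p * (b - a)) * ennreal (m powr p)"
    using nn_integral_phi_dev_le[OF assms] by (intro mult_right_mono) (auto simp: K_def m_def)
  also have "\<dots> = ennreal (K * (b - a))"
    using m K assms by (simp add: ennreal_mult[symmetric])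
  finally show ?thesis
    unfolding K_def[symmetric] using assms K by (intro ennreal_rpow_average_le) auto
qed

lemma osc_phi_eq_top:
  fixes q :: real
  assumes q: "1 < q"
  shows "osc q (phi (1 / q)) 0 1 = top"
proof (rule osc_eq_top)
  define c where "c = avg (phi (1 / q)) 0 1"
  define t0 where "t0 = 2 * \<bar>c\<bar> + 1"
  define d where "d = min 1 (t0 powr (-q))"
  define C where "C = 2 powr q"
  have t0: "0 < t0" by (simp add: t0_def)
  have d: "0 < d" "d \<le> 1" using t0 by (auto simp: d_def)
  \<comment> \<open>For \<open>0 < x \<le> d\<close> we have \<open>\<phi> x \<ge> 2\<bar>c\<bar> + 1\<close>, so \<open>\<bar>\<phi> x - c\<bar> \<ge> \<phi> x / 2\<close>.\<close>
  have lower: "1 / C * (1 / x) \<le> \<bar>phi (1 / q) x - c\<bar> powr q" if "0 < x" "x \<le> d" for x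
  proof -
    define t where "t = x powr (-(1 / q))"
    have "d powr (-(1 / q)) \<le> t"
      unfolding t_def using that q by (intro powr_mono2') auto
    moreover have "(t0 powr (-q)) powr (-(1 / q)) \<le> d powr (-(1 / q))"
      using d t0 q by (intro powr_mono2') (auto simp: d_def)
    moreover have "(t0 powr (-q)) powr (-(1 / q)) = t0"
      using q t0 by (simp add: powr_powr)
    ultimately have "t0 \<le> t" by linarith
    then have "(t / 2) powr q \<le> \<bar>t - c\<bar> powr q"
      using t0 q unfolding t0_def by (intro powr_mono2) auto
    moreover have "(t / 2) powr q = 1 / C * (1 / x)"
    proof -
      have "(t / 2) powr q = t powr q / C" by (simp add: powr_divide C_def)
      also have "t powr q = x powr (-1)" using q by (simp add: t_def powr_powr)
      also have "x powr (-1) = 1 / x" using that by (simp add: powr_minus_divide)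
      finally show ?thesis by simp
    qed
    moreover have "phi (1 / q) x = t" using that d by (simp add: phi_def t_def)
    ultimately show ?thesis by simp
  qed
  have "top = ennreal (1 / C) * (\<integral>\<^sup>+x\<in>{0..d}. ennreal (1 / x) \<partial>lborel)"
    using nn_integral_inverse_Icc_0_eq_top[OF d(1)] by (simp add: C_def)
  also have "\<dots> = (\<integral>\<^sup>+x\<in>{0..d}. ennreal (1 / C * (1 / x)) \<partial>lborel)"
  proof (subst nn_integral_cmult[symmetric])
    show "(\<lambda>x. ennreal (1 / x) * indicator {0..d} x) \<in> borel_measurable lborel" by measurable
    have "0 < C" by (simp add: C_def)
    then show "(\<integral>\<^sup>+x. ennreal (1 / C) * (ennreal (1 / x) * indicator {0..d} x) \<partial>lborel)
        = (\<integral>\<^sup>+x\<in>{0..d}. ennreal (1 / C * (1 / x)) \<partial>lborel)"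
      by (intro nn_integral_cong) (auto simp: indicator_def ennreal_mult[symmetric] simp del: ennreal_mult)
  qed
  also have "\<dots> \<le> (\<integral>\<^sup>+x\<in>{0..1}. ennreal (\<bar>phi (1 / q) x - c\<bar> powr q) \<partial>lborel)"
  proof (rule nn_integral_mono)
    fix x
    show "ennreal (1 / C * (1 / x)) * indicator {0..d} x
      \<le> ennreal (\<bar>phi (1 / q) x - c\<bar> powr q) * indicator {0..1} x"
      using lower[of x] d by (cases "0 < x \<and> x \<le> d") (auto simp: indicator_def)
  qed
  finally show "(\<integral>\<^sup>+x\<in>{0..1}. ennreal (\<bar>phi (1 / q) x - avg (phi (1 / q)) 0 1\<bar> powr q) \<partial>lborel) = top"
    unfolding c_def by (simp add: top_unique)
qed

lemma osc_psi_pos: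
  fixes q :: real
  assumes q: "0 < q"
  shows "0 < osc q psi 0 1"
proof (rule osc_pos)
  define c where "c = avg psi 0 1"
  obtain l where l: "0 \<le> l" "l + 1/4 \<le> 1" "\<And>x. x \<in> {l..l + 1/4} \<Longrightarrow> 1/4 \<le> \<bar>x - c\<bar>"
  proof (cases "c \<le> 1/2")
    case True
    show ?thesis by (rule that[of "3/4"]) (use True in auto)
  next
    case False
    show ?thesis by (rule that[of 0]) (use False in auto)
  qed
  have "0 < ennreal ((1/4) powr q) * ennreal (1/4)"
    by (simp add: ennreal_zero_less_mult_iff)
  also have "\<dots> = (\<integral>\<^sup>+x. ennreal ((1/4) powr q) * indicator {l..l + 1/4} x \<partial>lborel)"
    by (subst nn_integral_cmult_indicator) auto
  also have "\<dots> \<le> (\<integral>\<^sup>+x\<in>{0..1}. ennreal (\<bar>psi x - c\<bar> powr q) \<partial>lborel)"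
  proof (rule nn_integral_mono)
    fix x
    show "ennreal ((1/4) powr q) * indicator {l..l + 1/4} x \<le> ennreal (\<bar>psi x - c\<bar> powr q) * indicator {0..1} x"
    proof (cases "x \<in> {l..l + 1/4}")
      case True
      then have "x \<in> {0..1}" "psi x = x" using l by (auto simp: psi_def)
      moreover have "(1/4) powr q \<le> \<bar>x - c\<bar> powr q"
        using l(3)[OF True] q by (intro powr_mono2) auto
      ultimately show ?thesis using True by (simp add: indicator_def)
    qed simp
  qed
  finally show "0 < (\<integral>\<^sup>+x\<in>{0..1}. ennreal (\<bar>psi x - avg psi 0 1\<bar> powr q) \<partial>lborel)"
    unfolding c_def .
qed

lemma locally_Lp_phi:
  fixes al p :: real
  assumes "0 < al" "al * p < 1" "1 < p"
  shows "locally_Lp p (phi al)"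
  unfolding locally_Lp_def
proof (intro conjI allI)
  show "phi al \<in> borel_measurable lborel" by measurable
  fix a b :: real
  have "(\<integral>\<^sup>+x\<in>{a..b}. ennreal (\<bar>phi al x\<bar> powr p) \<partial>lborel)
      \<le> (\<integral>\<^sup>+x\<in>{a - 1..max a b}. ennreal (phi al x powr p) \<partial>lborel)"
  proof (rule nn_integral_mono)
    fix x
    show "ennreal (\<bar>phi al x\<bar> powr p) * indicator {a..b} x
      \<le> ennreal (phi al x powr p) * indicator {a - 1..max a b} x"
      using phi_nonneg[of al x] by (cases "x \<in> {a..b}") (auto simp: indicator_def)
  qed
  also have "\<dots> \<le> ennreal (min (max a b - (a - 1)) 1 powr (1 - al * p) / (1 - al * p))"
    using assms by (intro nn_integral_phi_powr_le) auto
  also have "\<dots> < top" by simp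
  finally show "(\<integral>\<^sup>+x\<in>{a..b}. ennreal (\<bar>phi al x\<bar> powr p) \<partial>lborel) < top" .
qed

lemma locally_Lp_psi:
  fixes p :: real
  assumes "0 < p"
  shows "locally_Lp p psi"
  unfolding locally_Lp_def
proof (intro conjI allI)
  show "psi \<in> borel_measurable lborel" unfolding psi_def by measurable
  fix a b :: real
  have "(\<integral>\<^sup>+x\<in>{a..b}. ennreal (\<bar>psi x\<bar> powr p) \<partial>lborel) \<le> (\<integral>\<^sup>+x. 1 * indicator {a..b} x \<partial>lborel)"
    using assms by (intro nn_integral_mono) (auto simp: indicator_def psi_def intro!: powr_le1)
  also have "\<dots> < top"
    by (subst nn_integral_cmult_indicator) (auto simp: emeasure_lborel_Icc_eq)
  finally show "(\<integral>\<^sup>+x\<in>{a..b}. ennreal (\<bar>psi x\<bar> powr p) \<partial>lborel) < top" .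
qed

theorem proposition4p1:
  fixes p q :: real
  assumes "1 < p" and "p < q"
  shows "\<exists>\<phi> \<psi> :: real \<Rightarrow> real. locally_Lp p \<phi> \<and> locally_Lp p \<psi> \<and>
           S_r p \<phi> \<psi> < top \<and> T_r p \<phi> \<psi> < top \<and> S_r q \<phi> \<psi> = top"
proof (intro exI conjI)
  have al: "0 < 1 / q" "1 / q * p < 1" using assms by auto
  define K where "K = (1 / (1 - 1 / q * p) + (1 / (1 - 1 / q)) powr p) powr (1 / p)"
  show "locally_Lp p (phi (1 / q))" by (rule locally_Lp_phi[OF al assms(1)])
  show "locally_Lp p psi" using assms by (intro locally_Lp_psi) auto
  have "S_r p (phi (1 / q)) psi \<le> ennreal K"
    unfolding S_r_def K_def using osc_phi_mult_osc_psi_le[OF al assms(1)] by (intro SUP_least) auto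
  then show "S_r p (phi (1 / q)) psi < top" using le_less_trans by fastforce
  have "T_r p (phi (1 / q)) psi \<le> ennreal K"
    unfolding T_r_def K_def using T_r_term_phi_psi_le[OF al assms(1)] by (intro SUP_least) auto
  then show "T_r p (phi (1 / q)) psi < top" using le_less_trans by fastforce
  have "0 < osc q psi 0 1" using assms by (intro osc_psi_pos) auto
  then have "osc q (phi (1 / q)) 0 1 * osc q psi 0 1 = top"
    using osc_phi_eq_top[of q] assms by (simp add: ennreal_top_mult)
  moreover have "osc q (phi (1 / q)) 0 1 * osc q psi 0 1 \<le> S_r q (phi (1 / q)) psi"
    by (rule osc_mult_osc_le_S_r) simp
  ultimately show "S_r q (phi (1 / q)) psi = top" by (simp add: top_unique)
qed

end
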